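(* There exist constants $c>0$ and $N$ such that every graph $G$ of order $n\ge N$ satisfies $$\mathrm{adim}(G)\ge \mathrm{bdim}(G)\ge c\log n.$$
   Context: $d(x,y)$ is the length of a shortest $x$–$y$ path, with $d(x,y)=\infty$ if $x,y$ lie in different components. For an integer $k\ge1$ let $d_k(x,y)=\min\{d(x,y),k+1\}$. A set $A\subseteq V(G)$ is an adjacency resolving set if for all distinct $x,y\in V(G)$ there is $z\in A$ with $d_1(x,z)\ne d_1(y,z)$. $\mathrm{adim}(G)$ is the minimum size of an adjacency resolving set. A function $f:V(G)\to\mathbb{Z}_{\ge 0}$ is a resolving broadcast of $G$ if for all distinct $x,y\in V(G)$ there is $z\in V(G)$ with $f(z)=i>0$ and $d_i(x,z)\ne d_i(y,z)$. The broadcast dimension $\mathrm{bdim}(G)$ is the minimum of $\sum_{v\in V(G)}f(v)$ over all resolving broadcasts $f$ of $G$. *)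

theory Defs
  imports Complex_Main "HOL-Library.Extended_Nat"
begin

text \<open>A finite simple graph on vertex set V (vertices are naturals; every finite graph
is isomorphic to one of these) with symmetric irreflexive edge relation E.\<close>
definition fin_graph :: "nat set \<Rightarrow> (nat \<Rightarrow> nat \<Rightarrow> bool) \<Rightarrow> bool" where
  "fin_graph V E \<longleftrightarrow> finite V \<and> (\<forall>x y. E x y \<longrightarrow> x \<in> V \<and> y \<in> V)
     \<and> (\<forall>x y. E x y \<longrightarrow> E y x) \<and> (\<forall>x. \<not> E x x)"

definition walk_of_len :: "nat set \<Rightarrow> (nat \<Rightarrow> nat \<Rightarrow> bool) \<Rightarrow> nat \<Rightarrow> nat \<Rightarrow> nat \<Rightarrow> bool" where
  "walk_of_len V E x y k \<longleftrightarrow> (\<exists>p. length p = Suc k \<and> hd p = x \<and> last p = y \<and> set p \<subseteq> V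
      \<and> (\<forall>i<k. E (p ! i) (p ! Suc i)))"

definition gdist :: "nat set \<Rightarrow> (nat \<Rightarrow> nat \<Rightarrow> bool) \<Rightarrow> nat \<Rightarrow> nat \<Rightarrow> enat" where
  "gdist V E x y = (if \<exists>k. walk_of_len V E x y k
      then enat (LEAST k. walk_of_len V E x y k) else \<infinity>)"

definition tdist :: "nat set \<Rightarrow> (nat \<Rightarrow> nat \<Rightarrow> bool) \<Rightarrow> nat \<Rightarrow> nat \<Rightarrow> nat \<Rightarrow> enat" where
  "tdist V E k x y = min (gdist V E x y) (enat (k + 1))"

definition adj_resolving :: "nat set \<Rightarrow> (nat \<Rightarrow> nat \<Rightarrow> bool) \<Rightarrow> nat set \<Rightarrow> bool" where
  "adj_resolving V E A \<longleftrightarrow> A \<subseteq> V \<and>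
     (\<forall>x\<in>V. \<forall>y\<in>V. x \<noteq> y \<longrightarrow> (\<exists>z\<in>A. tdist V E 1 x z \<noteq> tdist V E 1 y z))"

definition adim :: "nat set \<Rightarrow> (nat \<Rightarrow> nat \<Rightarrow> bool) \<Rightarrow> nat" where
  "adim V E = (LEAST m. \<exists>A. adj_resolving V E A \<and> card A = m)"

text \<open>Resolving broadcast f : V \<rightarrow> nat (values outside V are irrelevant).\<close>
definition resolving_broadcast :: "nat set \<Rightarrow> (nat \<Rightarrow> nat \<Rightarrow> bool) \<Rightarrow> (nat \<Rightarrow> nat) \<Rightarrow> bool" where
  "resolving_broadcast V E f \<longleftrightarrow>
     (\<forall>x\<in>V. \<forall>y\<in>V. x \<noteq> y \<longrightarrow>
        (\<exists>z\<in>V. f z > 0 \<and> tdist V E (f z) x z \<noteq> tdist V E (f z) y z))"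

definition bdim :: "nat set \<Rightarrow> (nat \<Rightarrow> nat \<Rightarrow> bool) \<Rightarrow> nat" where
  "bdim V E = (LEAST m. \<exists>f. resolving_broadcast V E f \<and> (\<Sum>v\<in>V. f v) = m)"

end

theory Submission
  imports Defs "HOL-Library.FuncSet"
begin

text \<open>An adjacency resolving set \<open>A\<close> is a resolving broadcast of value 1 on \<open>A\<close>, so
  \<open>bdim \<le> adim\<close>. Conversely, under a resolving broadcast \<open>f\<close> every vertex \<open>x\<close> is determined by its
  vector of truncated distances \<open>d\<^bsub>f z\<^esub>(x, z)\<close>, \<open>z\<close> ranging over the vertices with \<open>f z > 0\<close>. The entry
  at \<open>z\<close> takes at most \<open>f z + 2 \<le> 3 ^ f z\<close> values, hence \<open>n \<le> 3 ^ bdim\<close> and \<open>bdim \<ge> ln n / ln 3\<close>.\<close>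

lemma tdist_self: "x \<in> V \<Longrightarrow> tdist V E k x x = 0"
proof -
  assume x: "x \<in> V"
  have walk: "walk_of_len V E x x 0"
    unfolding walk_of_len_def by (rule exI[of _ "[x]"]) (simp add: x)
  hence "(LEAST k. walk_of_len V E x x k) = 0" by (simp add: Least_eq_0)
  thus ?thesis using walk unfolding tdist_def gdist_def by (auto simp: zero_enat_def)
qed

lemma tdist_eq_0_imp_eq: "tdist V E k x y = 0 \<Longrightarrow> x = y"
proof -
  assume "tdist V E k x y = 0"
  hence dist: "gdist V E x y = 0"
    unfolding tdist_def by (metis min_def enat_0_iff(1) add_eq_0_iff_both_eq_0 zero_neq_one)
  then obtain k0 where "walk_of_len V E x y k0"
    unfolding gdist_def by (metis infinity_ne_i0)
  moreover from this dist have "(LEAST k. walk_of_len V E x y k) = 0"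
    unfolding gdist_def by (auto simp: zero_enat_def split: if_splits)
  ultimately have "walk_of_len V E x y 0" by (metis LeastI)
  then obtain p where "length p = 1" "hd p = x" "last p = y"
    unfolding walk_of_len_def by auto
  thus ?thesis by (cases p) auto
qed

lemma tdist_le: "tdist V E k x y \<le> enat (k + 1)"
  unfolding tdist_def by simp

lemma tdist_neq_infinity: "tdist V E k x y \<noteq> \<infinity>"
  using tdist_le[of V E k x y] by (cases "tdist V E k x y") auto

lemma adj_resolving_vertex_set: "adj_resolving V E V"
  unfolding adj_resolving_def by (metis tdist_self tdist_eq_0_imp_eq order_refl)

lemma adim_attained: "\<exists>A. adj_resolving V E A \<and> card A = adim V E"
proof -
  have "\<exists>m A. adj_resolving V E A \<and> card A = m" using adj_resolving_vertex_set by blast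
  thus ?thesis unfolding adim_def by (rule LeastI_ex)
qed

lemma resolving_broadcast_const_1: "resolving_broadcast V E (\<lambda>_. 1)"
  using adj_resolving_vertex_set unfolding adj_resolving_def resolving_broadcast_def by auto

lemma bdim_attained: "\<exists>f. resolving_broadcast V E f \<and> (\<Sum>v\<in>V. f v) = bdim V E"
proof -
  have "\<exists>m f. resolving_broadcast V E f \<and> (\<Sum>v\<in>V. f v) = m"
    using resolving_broadcast_const_1 by blast
  thus ?thesis unfolding bdim_def by (rule LeastI_ex)
qed

lemma resolving_broadcast_of_adj_resolving:
  assumes "adj_resolving V E A"
  shows "resolving_broadcast V E (\<lambda>z. if z \<in> A then 1 else 0)"
  unfolding resolving_broadcast_def
proof (intro ballI impI)
  fix x y assume "x \<in> V" "y \<in> V" "x \<noteq> y"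
  with assms obtain z where z: "z \<in> A" "tdist V E 1 x z \<noteq> tdist V E 1 y z"
    unfolding adj_resolving_def by blast
  moreover from assms z(1) have "z \<in> V" unfolding adj_resolving_def by blast
  ultimately show "\<exists>z\<in>V. 0 < (if z \<in> A then 1 else 0 :: nat) \<and>
      tdist V E (if z \<in> A then 1 else 0) x z \<noteq> tdist V E (if z \<in> A then 1 else 0) y z"
    by (intro bexI[of _ z]) simp_all
qed

lemma bdim_le_card_adj_resolving:
  assumes "finite V" and A: "adj_resolving V E A"
  shows "bdim V E \<le> card A"
proof -
  have "A \<subseteq> V" using A unfolding adj_resolving_def by simp
  with assms(1) have "(\<Sum>v\<in>V. if v \<in> A then 1 else 0) = card A"
    by (simp add: sum.If_cases Int_absorb1)
  thus ?thesis
    unfolding bdim_def using resolving_broadcast_of_adj_resolving[OF A] by (intro Least_le) blast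
qed

lemma bdim_le_adim: "finite V \<Longrightarrow> bdim V E \<le> adim V E"
proof -
  assume "finite V"
  obtain A where "adj_resolving V E A" "card A = adim V E"
    using adim_attained by blast
  with bdim_le_card_adj_resolving[OF \<open>finite V\<close>] show ?thesis by fastforce
qed

lemma tdist_in_range: "tdist V E k x y \<in> enat ` {..Suc k}"
  using tdist_le[of V E k x y] tdist_neq_infinity[of V E k x y]
  by (cases "tdist V E k x y") auto

lemma card_le_prod_broadcast:
  assumes "finite V" and f: "resolving_broadcast V E f"
  shows "card V \<le> (\<Prod>z\<in>{z\<in>V. f z > 0}. f z + 2)"
proof -
  define S where "S = {z\<in>V. f z > 0}"
  have "finite S" using assms(1) unfolding S_def by simp
  define code where "code x = restrict (\<lambda>z. tdist V E (f z) x z) S" for x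
  have "inj_on code V"
  proof (rule inj_onI, rule ccontr)
    fix x y assume "x \<in> V" "y \<in> V" "code x = code y" "x \<noteq> y"
    then obtain z where z: "z \<in> S" "tdist V E (f z) x z \<noteq> tdist V E (f z) y z"
      using f unfolding resolving_broadcast_def S_def by blast
    from \<open>code x = code y\<close> have "code x z = code y z" by simp
    with z show False unfolding code_def by simp
  qed
  moreover have "code ` V \<subseteq> PiE S (\<lambda>z. enat ` {..f z + 1})"
    unfolding code_def by (auto simp: restrict_PiE_iff tdist_in_range)
  ultimately have "card V \<le> card (PiE S (\<lambda>z. enat ` {..f z + 1}))"
    using \<open>finite S\<close> by (intro card_inj_on_le) (simp_all add: finite_PiE)
  also have "\<dots> = (\<Prod>z\<in>S. f z + 2)"
    using \<open>finite S\<close> by (simp add: card_PiE card_image inj_on_def)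
  finally show ?thesis unfolding S_def .
qed

lemma add_2_le_3_power: "1 \<le> k \<Longrightarrow> k + 2 \<le> (3::nat) ^ k"
  by (induction k rule: nat_induct_at_least) simp_all

lemma card_le_3_power_bdim:
  assumes "finite V"
  shows "card V \<le> 3 ^ bdim V E"
proof -
  obtain f where f: "resolving_broadcast V E f" "(\<Sum>v\<in>V. f v) = bdim V E"
    using bdim_attained by blast
  define S where "S = {z\<in>V. f z > 0}"
  have "card V \<le> (\<Prod>z\<in>S. f z + 2)"
    unfolding S_def using card_le_prod_broadcast[OF assms f(1)] .
  also have "\<dots> \<le> (\<Prod>z\<in>S. 3 ^ f z)"
  proof (rule prod_mono)
    fix z assume "z \<in> S"
    hence "1 \<le> f z" unfolding S_def by simp
    thus "0 \<le> f z + 2 \<and> f z + 2 \<le> 3 ^ f z" using add_2_le_3_power by simp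
  qed
  also have "\<dots> = 3 ^ (\<Sum>z\<in>S. f z)" by (simp add: power_sum)
  also have "(\<Sum>z\<in>S. f z) = (\<Sum>z\<in>V. f z)"
    unfolding S_def using assms by (intro sum.mono_neutral_left) auto
  finally show ?thesis using f(2) by simp
qed

lemma ln_le_mult_ln_if_le_power:
  assumes "n \<le> b ^ m" and "1 < b"
  shows "ln (real n) \<le> real m * ln (real b)"
proof (cases "n = 0")
  case False
  from assms(1) have "real n \<le> real b ^ m" by (metis of_nat_le_iff of_nat_power)
  with False have "ln (real n) \<le> ln (real b ^ m)" by (simp add: ln_mono)
  also have "\<dots> = real m * ln (real b)" using assms(2) by (simp add: ln_realpow)
  finally show ?thesis .
qed (use assms(2) in simp)

theorem theorem3p11:
  shows "\<exists>c::real. c > 0 \<and> (\<exists>N::nat. \<forall>V E. fin_graph V E \<and> card V \<ge> N \<longrightarrow>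
           adim V E \<ge> bdim V E \<and> real (bdim V E) \<ge> c * ln (real (card V)))"
proof (intro exI[of _ "1 / ln 3"] conjI exI[of _ 0] allI impI)
  show "(0::real) < 1 / ln 3" by simp
  fix V E assume "fin_graph V E \<and> 0 \<le> card V"
  hence "finite V" unfolding fin_graph_def by simp
  show "bdim V E \<le> adim V E" using bdim_le_adim[OF \<open>finite V\<close>] .
  have "ln (real (card V)) \<le> real (bdim V E) * ln 3"
    using ln_le_mult_ln_if_le_power[OF card_le_3_power_bdim[OF \<open>finite V\<close>]] by simp
  thus "1 / ln 3 * ln (real (card V)) \<le> real (bdim V E)"
    by (simp add: divide_le_eq mult.commute)
qed

end
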